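(* For every $n\ge 0$ and every monotone language $L\subseteq\{0,1\}^n$, the minimal PDFA recognizing $L$ has at most \[ \sum_{i=0}^n \min\bigl(2^i,\ |F_{n-i}|-1\bigr) \] states. Moreover, for each $n\le 10$ there is a monotone language $L\subseteq\{0,1\}^n$ whose minimal PDFA has exactly this many states.
   Context: A PDFA is a deterministic finite automaton whose transition function may be partial; the minimal PDFA of $L$ is one recognizing $L$ with the least number of states. A language $L\subseteq\{0,1\}^n$ is monotone if whenever $s\in L$ and $t\in\{0,1\}^n$ pointwise dominates $s$ (i.e., $s(j)\le t(j)$ for all $j$), then $t\in L$. $F_k$ denotes the set of monotone Boolean functions of $k$ variables (including the constants $0$ and $1$); $|F_k|$ is the $k$th Dedekind number. *)

theory Defs
  imports Main
begin

text \<open>Words over the alphabet {0,1} are bool lists (False = 0, True = 1).\<close>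

definition is_pdfa :: "nat set \<Rightarrow> nat \<Rightarrow> (nat \<Rightarrow> bool \<Rightarrow> nat option) \<Rightarrow> nat set \<Rightarrow> bool" where
  "is_pdfa Q q0 d F \<longleftrightarrow> finite Q \<and> q0 \<in> Q \<and> F \<subseteq> Q \<and>
     (\<forall>q\<in>Q. \<forall>a q'. d q a = Some q' \<longrightarrow> q' \<in> Q)"

fun pdfa_run :: "(nat \<Rightarrow> bool \<Rightarrow> nat option) \<Rightarrow> nat \<Rightarrow> bool list \<Rightarrow> nat option" where
  "pdfa_run d q [] = Some q"
| "pdfa_run d q (a # w) = (case d q a of None \<Rightarrow> None | Some q' \<Rightarrow> pdfa_run d q' w)"

definition pdfa_lang :: "nat \<Rightarrow> (nat \<Rightarrow> bool \<Rightarrow> nat option) \<Rightarrow> nat set \<Rightarrow> bool list set" where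
  "pdfa_lang q0 d F = {w. \<exists>q. pdfa_run d q0 w = Some q \<and> q \<in> F}"

definition min_pdfa_states :: "bool list set \<Rightarrow> nat" where
  "min_pdfa_states L = (LEAST k. \<exists>Q q0 d F. is_pdfa Q q0 d F \<and> pdfa_lang q0 d F = L \<and> card Q = k)"

definition monotone_lang :: "nat \<Rightarrow> bool list set \<Rightarrow> bool" where
  "monotone_lang n L \<longleftrightarrow> L \<subseteq> {w. length w = n} \<and>
     (\<forall>s\<in>L. \<forall>t. length t = n \<and> (\<forall>j<n. s ! j \<le> t ! j) \<longrightarrow> t \<in> L)"

text \<open>F_k: monotone Boolean functions of k variables, as functions on {0,1}^k
  (represented extensionally: value False outside words of length k).\<close>
definition monotone_bool_funs :: "nat \<Rightarrow> (bool list \<Rightarrow> bool) set" where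
  "monotone_bool_funs k = {f. (\<forall>w. length w \<noteq> k \<longrightarrow> f w = False) \<and>
     (\<forall>s t. length s = k \<and> length t = k \<and> (\<forall>j<k. s ! j \<le> t ! j) \<longrightarrow> f s \<le> f t)}"

end

theory Submission
  imports Defs
begin

text \<open>A PDFA needs a separate state for every nonempty residual \<open>w\<inverse>L\<close>, and the residual
  automaton has exactly one, so the minimal number of states is the number of nonempty residuals.
  For \<open>L \<subseteq> {0,1}\<^sup>n\<close> a residual determines the length of the word it was taken by, the
  residuals by words of length \<open>i\<close> are at most \<open>2\<^sup>i\<close> in number, and each of them is a
  nonempty monotone Boolean function of the remaining \<open>n - i\<close> variables; summing over \<open>i\<close>
  gives the bound. For \<open>n \<le> 10\<close> it is attained by explicit upward closures of antichains, whose
  residual counts are evaluated on their decision trees.\<close>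

section \<open>Residuals and the minimal PDFA\<close>

definition residual :: "'a list \<Rightarrow> 'a list set \<Rightarrow> 'a list set" where
  "residual w L = {v. w @ v \<in> L}"

definition residuals :: "'a list set \<Rightarrow> 'a list set set" where
  "residuals L = {residual w L | w. residual w L \<noteq> {}}"

lemma residual_Nil [simp]: "residual [] L = L"
  by (simp add: residual_def)

lemma residual_empty [simp]: "residual w {} = {}"
  by (simp add: residual_def)

lemma residual_residual [simp]: "residual v (residual w L) = residual (w @ v) L"
  by (simp add: residual_def)

lemma residual_in_residuals:
  "X \<in> residuals L \<Longrightarrow> residual w X \<noteq> {} \<Longrightarrow> residual w X \<in> residuals L"
  unfolding residuals_def by auto

lemma pdfa_run_append:
  "pdfa_run d q (u @ v) = (case pdfa_run d q u of None \<Rightarrow> None | Some q' \<Rightarrow> pdfa_run d q' v)"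
  by (induction u arbitrary: q) (auto split: option.splits)

lemma pdfa_run_in_states:
  assumes "is_pdfa Q q0 d F" "q \<in> Q" "pdfa_run d q w = Some q'"
  shows "q' \<in> Q"
  using assms(2,3)
proof (induction w arbitrary: q)
  case (Cons a w)
  then obtain q1 where "d q a = Some q1" "pdfa_run d q1 w = Some q'"
    by (auto split: option.splits)
  with assms(1) Cons show ?case
    unfolding is_pdfa_def by blast
qed simp

lemma residual_pdfa_lang:
  "residual w (pdfa_lang q0 d F) =
     (case pdfa_run d q0 w of None \<Rightarrow> {} | Some q \<Rightarrow> pdfa_lang q d F)"
  by (auto simp: residual_def pdfa_lang_def pdfa_run_append split: option.splits)

lemma card_residuals_le_card_states:
  assumes "is_pdfa Q q0 d F"
  shows "card (residuals (pdfa_lang q0 d F)) \<le> card Q"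
proof -
  have "residuals (pdfa_lang q0 d F) \<subseteq> (\<lambda>q. pdfa_lang q d F) ` Q"
  proof
    fix X assume "X \<in> residuals (pdfa_lang q0 d F)"
    then obtain w where X: "X = residual w (pdfa_lang q0 d F)" "X \<noteq> {}"
      unfolding residuals_def by blast
    then obtain q where q: "pdfa_run d q0 w = Some q"
      by (auto simp: residual_pdfa_lang split: option.splits)
    have "q \<in> Q"
      using pdfa_run_in_states[OF assms _ q] assms unfolding is_pdfa_def by blast
    then show "X \<in> (\<lambda>q. pdfa_lang q d F) ` Q"
      using X(1) q by (simp add: residual_pdfa_lang)
  qed
  moreover have "finite Q"
    using assms unfolding is_pdfa_def by blast
  ultimately show ?thesis
    using card_mono card_image_le le_trans finite_imageI by metis
qed

text \<open>The residual automaton: its states are the nonempty residuals of \<open>L\<close>, numbered by an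
  injection \<open>f\<close> into \<^typ>\<open>nat\<close>.\<close>

definition residual_trans ::
  "(bool list set \<Rightarrow> nat) \<Rightarrow> bool list set \<Rightarrow> nat \<Rightarrow> bool \<Rightarrow> nat option" where
  "residual_trans f L q a =
     (let X = inv_into (residuals L) f q
      in if q \<in> f ` residuals L \<and> residual [a] X \<noteq> {} then Some (f (residual [a] X)) else None)"

lemma pdfa_run_residual_trans:
  assumes "inj_on f (residuals L)" "X \<in> residuals L"
  shows "pdfa_run (residual_trans f L) (f X) w =
           (if residual w X = {} then None else Some (f (residual w X)))"
  using assms(2)
proof (induction w arbitrary: X)
  case Nil
  then show ?case
    unfolding residuals_def by auto
next
  case (Cons a w)
  have trans: "residual_trans f L (f X) a =
                 (if residual [a] X = {} then None else Some (f (residual [a] X)))"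
    using Cons.prems assms(1) by (simp add: residual_trans_def)
  show ?case
  proof (cases "residual [a] X = {}")
    case True
    then have "residual (a # w) X = {}"
      using residual_residual[of w "[a]" X] by simp
    with True trans show ?thesis
      by simp
  next
    case False
    with trans Cons.IH[OF residual_in_residuals[OF Cons.prems False]] show ?thesis
      by simp
  qed
qed

lemma residual_automaton:
  assumes "finite (residuals L)" "L \<noteq> {}"
  shows "\<exists>Q q0 d F. is_pdfa Q q0 d F \<and> pdfa_lang q0 d F = L \<and> card Q = card (residuals L)"
proof -
  obtain f :: "bool list set \<Rightarrow> nat" where inj: "inj_on f (residuals L)"
    using finite_imp_inj_to_nat_seg[OF assms(1)] by blast
  define Q where "Q = f ` residuals L"
  define F where "F = f ` {X \<in> residuals L. [] \<in> X}"
  have L: "L \<in> residuals L"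
    using assms(2) residual_Nil unfolding residuals_def by blast
  have run: "pdfa_run (residual_trans f L) (f L) w =
               (if residual w L = {} then None else Some (f (residual w L)))" for w
    using pdfa_run_residual_trans[OF inj L] by simp
  have "q' \<in> Q" if "residual_trans f L q a = Some q'" for q a q'
    using that residual_in_residuals[OF inv_into_into[of q f "residuals L"]]
    unfolding residual_trans_def Q_def Let_def by (auto split: if_splits)
  then have "is_pdfa Q (f L) (residual_trans f L) F"
    unfolding is_pdfa_def using assms(1) L by (auto simp: Q_def F_def)
  moreover have "pdfa_lang (f L) (residual_trans f L) F = L"
  proof -
    have "f (residual w L) \<in> F \<longleftrightarrow> [] \<in> residual w L" if "residual w L \<noteq> {}" for w
      using that inj unfolding F_def residuals_def by (auto dest: inj_onD)
    then show ?thesis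
      unfolding pdfa_lang_def run by (auto simp: residual_def intro: exI[of _ "[]"])
  qed
  moreover have "card Q = card (residuals L)"
    unfolding Q_def using inj by (rule card_image)
  ultimately show ?thesis
    by blast
qed

lemma min_pdfa_states_eq_card_residuals:
  assumes "finite (residuals L)" "L \<noteq> {}"
  shows "min_pdfa_states L = card (residuals L)"
  unfolding min_pdfa_states_def
proof (rule Least_equality)
  show "\<exists>Q q0 d F. is_pdfa Q q0 d F \<and> pdfa_lang q0 d F = L \<and> card Q = card (residuals L)"
    using residual_automaton[OF assms] .
next
  fix k assume "\<exists>Q q0 d F. is_pdfa Q q0 d F \<and> pdfa_lang q0 d F = L \<and> card Q = k"
  then show "card (residuals L) \<le> k"
    using card_residuals_le_card_states by blast
qed

lemma min_pdfa_states_empty_le: "min_pdfa_states {} \<le> 1"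
proof -
  have "is_pdfa {0} 0 (\<lambda>_ _. None) {} \<and> pdfa_lang 0 (\<lambda>_ _. None) {} = {} \<and> card {0::nat} = 1"
    by (auto simp: is_pdfa_def pdfa_lang_def)
  then show ?thesis
    unfolding min_pdfa_states_def by (intro Least_le) blast
qed

section \<open>Residuals of languages of words of a fixed length\<close>

definition residuals_at :: "'a list set \<Rightarrow> nat \<Rightarrow> 'a list set set" where
  "residuals_at L i = {residual w L | w. length w = i \<and> residual w L \<noteq> {}}"

definition monotone_state_bound :: "nat \<Rightarrow> nat" where
  "monotone_state_bound n = (\<Sum>i = 0..n. min (2 ^ i) (card (monotone_bool_funs (n - i)) - 1))"

lemma length_mem_residual:
  "L \<subseteq> {w. length w = n} \<Longrightarrow> v \<in> residual w L \<Longrightarrow> length w + length v = n"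
  unfolding residual_def by auto

lemma finite_bool_lists_length: "finite {w :: bool list. length w = i}"
  using finite_lists_length_eq[of "UNIV :: bool set" i] by simp

lemma card_bool_lists_length: "card {w :: bool list. length w = i} = 2 ^ i"
  using card_lists_length_eq[of "UNIV :: bool set" i] by simp

lemma residuals_at_subset_image: "residuals_at L i \<subseteq> (\<lambda>w. residual w L) ` {w. length w = i}"
  unfolding residuals_at_def by blast

lemma finite_residuals_at: "finite (residuals_at (L :: bool list set) i)"
  by (rule finite_surj[OF finite_bool_lists_length residuals_at_subset_image])

lemma card_residuals_at_le_pow: "card (residuals_at (L :: bool list set) i) \<le> 2 ^ i"
proof -
  have "card (residuals_at L i) \<le> card ((\<lambda>w. residual w L) ` {w :: bool list. length w = i})"
    by (intro card_mono finite_imageI finite_bool_lists_length residuals_at_subset_image)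
  also have "\<dots> \<le> 2 ^ i"
    using card_image_le[OF finite_bool_lists_length] card_bool_lists_length by metis
  finally show ?thesis .
qed

lemma residuals_eq_UN_residuals_at:
  assumes "L \<subseteq> {w. length w = n}"
  shows "residuals L = (\<Union>i\<in>{0..n}. residuals_at L i)"
proof
  show "residuals L \<subseteq> (\<Union>i\<in>{0..n}. residuals_at L i)"
  proof
    fix X assume "X \<in> residuals L"
    then obtain w where X: "X = residual w L" "X \<noteq> {}"
      unfolding residuals_def by blast
    then have "length w \<le> n"
      using length_mem_residual[OF assms] by fastforce
    moreover have "X \<in> residuals_at L (length w)"
      using X unfolding residuals_at_def by blast
    ultimately show "X \<in> (\<Union>i\<in>{0..n}. residuals_at L i)"
      by auto
  qed
qed (auto simp: residuals_def residuals_at_def)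

lemma residuals_at_disjoint:
  assumes "L \<subseteq> {w. length w = n}" "i \<noteq> j"
  shows "residuals_at L i \<inter> residuals_at L j = {}"
proof (rule ccontr)
  assume "residuals_at L i \<inter> residuals_at L j \<noteq> {}"
  then obtain u w v where "length u = i" "length w = j" "v \<in> residual u L" "v \<in> residual w L"
    unfolding residuals_at_def by blast
  then have "length u + length v = n" "length w + length v = n"
    using length_mem_residual[OF assms(1)] by blast+
  with \<open>length u = i\<close> \<open>length w = j\<close> assms(2) show False
    by simp
qed

lemma finite_residuals:
  "(L :: bool list set) \<subseteq> {w. length w = n} \<Longrightarrow> finite (residuals L)"
  by (simp add: residuals_eq_UN_residuals_at finite_residuals_at)

lemma card_residuals_eq_sum:
  assumes "(L :: bool list set) \<subseteq> {w. length w = n}"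
  shows "card (residuals L) = (\<Sum>i = 0..n. card (residuals_at L i))"
  unfolding residuals_eq_UN_residuals_at[OF assms]
  by (rule card_UN_disjoint) (auto simp: finite_residuals_at residuals_at_disjoint[OF assms])

lemma residual_in_monotone_bool_funs:
  assumes "monotone_lang n L"
  shows "(\<lambda>v. v \<in> residual w L) \<in> monotone_bool_funs (n - length w)"
proof -
  have L: "L \<subseteq> {w. length w = n}"
    using assms unfolding monotone_lang_def by blast
  have "w @ t \<in> L"
    if "w @ s \<in> L" "length t = length s" "\<forall>j < length s. s ! j \<le> t ! j" for s t
  proof -
    have "\<forall>j < n. (w @ s) ! j \<le> (w @ t) ! j"
      using that L by (auto simp: nth_append)
    then show ?thesis
      using assms that unfolding monotone_lang_def by force
  qed
  then show ?thesis
    using length_mem_residual[OF L, of _ w] unfolding monotone_bool_funs_def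
    by (fastforce simp: residual_def)
qed

lemma finite_monotone_bool_funs: "finite (monotone_bool_funs k)"
proof (rule finite_subset)
  show "monotone_bool_funs k \<subseteq> (\<lambda>S v. v \<in> S) ` Pow {w. length w = k}"
  proof
    fix f assume "f \<in> monotone_bool_funs k"
    then have "f = (\<lambda>v. v \<in> {w. length w = k \<and> f w})"
      unfolding monotone_bool_funs_def by (auto simp: fun_eq_iff)
    then show "f \<in> (\<lambda>S v. v \<in> S) ` Pow {w. length w = k}"
      by blast
  qed
  show "finite ((\<lambda>S v. v \<in> S) ` Pow {w :: bool list. length w = k})"
    using finite_bool_lists_length by blast
qed

lemma card_residuals_at_le_card_monotone:
  assumes "monotone_lang n L"
  shows "card (residuals_at L i) \<le> card (monotone_bool_funs (n - i)) - 1"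
proof -
  let ?fun = "\<lambda>X v. v \<in> X"
  have "?fun ` residuals_at L i \<subseteq> monotone_bool_funs (n - i) - {\<lambda>_. False}"
    using residual_in_monotone_bool_funs[OF assms]
    unfolding residuals_at_def by (auto simp: fun_eq_iff)
  moreover have "inj_on ?fun (residuals_at L i)"
    by (auto simp: inj_on_def fun_eq_iff)
  ultimately have "card (residuals_at L i) \<le> card (monotone_bool_funs (n - i) - {\<lambda>_. False})"
    by (intro card_inj_on_le) (simp_all add: finite_monotone_bool_funs)
  moreover have "(\<lambda>_. False) \<in> monotone_bool_funs (n - i)"
    by (simp add: monotone_bool_funs_def)
  ultimately show ?thesis
    by (simp add: card_Diff_singleton finite_monotone_bool_funs)
qed

lemma two_le_card_monotone_bool_funs: "2 \<le> card (monotone_bool_funs k)"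
proof -
  have "{\<lambda>_. False, \<lambda>w. length w = k} \<subseteq> monotone_bool_funs k"
    unfolding monotone_bool_funs_def by auto
  moreover have "(\<lambda>_ :: bool list. False) \<noteq> (\<lambda>w. length w = k)"
    by (auto simp: fun_eq_iff intro: exI[of _ "replicate k False"])
  then have "card {\<lambda>_ :: bool list. False, \<lambda>w. length w = k} = 2"
    by simp
  ultimately show ?thesis
    using card_mono[OF finite_monotone_bool_funs] by metis
qed

lemma min_pdfa_states_monotone_le:
  assumes "monotone_lang n L"
  shows "min_pdfa_states L \<le> monotone_state_bound n"
proof (cases "L = {}")
  case True
  have "min_pdfa_states L \<le> min (2 ^ 0) (card (monotone_bool_funs (n - 0)) - 1)"
    using True min_pdfa_states_empty_le two_le_card_monotone_bool_funs[of n] by simp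
  also have "\<dots> \<le> monotone_state_bound n"
    unfolding monotone_state_bound_def by (rule member_le_sum) auto
  finally show ?thesis .
next
  case False
  have L: "L \<subseteq> {w. length w = n}"
    using assms unfolding monotone_lang_def by blast
  have "min_pdfa_states L = (\<Sum>i = 0..n. card (residuals_at L i))"
    using min_pdfa_states_eq_card_residuals[OF finite_residuals[OF L] False]
      card_residuals_eq_sum[OF L] by simp
  also have "\<dots> \<le> monotone_state_bound n"
    unfolding monotone_state_bound_def
    using card_residuals_at_le_pow card_residuals_at_le_card_monotone[OF assms]
    by (intro sum_mono) simp
  finally show ?thesis .
qed

lemma min_pdfa_states_monotone_eq:
  assumes "monotone_lang n L"
    and "\<And>i. i \<le> n \<Longrightarrow>
           min (2 ^ i) (card (monotone_bool_funs (n - i)) - 1) \<le> card (residuals_at L i)"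
  shows "min_pdfa_states L = monotone_state_bound n"
proof -
  have L: "L \<subseteq> {w. length w = n}"
    using assms(1) unfolding monotone_lang_def by blast
  have "residuals_at L 0 \<noteq> {}"
    using assms(2)[of 0] two_le_card_monotone_bool_funs[of n] by auto
  then have "L \<noteq> {}"
    unfolding residuals_at_def by auto
  then have "min_pdfa_states L = (\<Sum>i = 0..n. card (residuals_at L i))"
    using min_pdfa_states_eq_card_residuals[OF finite_residuals[OF L]]
      card_residuals_eq_sum[OF L] by simp
  also have "\<dots> = monotone_state_bound n"
    unfolding monotone_state_bound_def
    using card_residuals_at_le_pow card_residuals_at_le_card_monotone[OF assms(1)] assms(2)
    by (intro sum.cong refl antisym) simp_all
  finally show ?thesis .
qed

section \<open>Dedekind numbers up to three variables\<close>

definition up_closed_word_lists :: "nat \<Rightarrow> bool list list list" where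
  "up_closed_word_lists k =
     filter (\<lambda>S. \<forall>s\<in>set S. \<forall>t\<in>set (List.n_lists k [False, True]).
                    list_all2 (\<le>) s t \<longrightarrow> t \<in> set S)
       (subseqs (List.n_lists k [False, True]))"

lemma card_monotone_bool_funs_le_length:
  "card (monotone_bool_funs k) \<le> length (up_closed_word_lists k)"
proof -
  let ?words = "List.n_lists k [False, True]"
  have words: "set ?words = {w. length w = k}"
    by (auto simp: set_n_lists)
  have "monotone_bool_funs k \<subseteq> (\<lambda>S v. v \<in> set S) ` set (up_closed_word_lists k)"
  proof
    fix f assume f: "f \<in> monotone_bool_funs k"
    have "{w \<in> set ?words. f w} \<in> Pow (set ?words)"
      by blast
    then obtain S where S: "S \<in> set (subseqs ?words)" "set S = {w \<in> set ?words. f w}"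
      unfolding subseqs_powset[symmetric] by blast
    have "f = (\<lambda>v. v \<in> set S)"
      using f unfolding S(2) words monotone_bool_funs_def by (auto simp: fun_eq_iff)
    moreover have "S \<in> set (up_closed_word_lists k)"
      using f S unfolding words up_closed_word_lists_def monotone_bool_funs_def
      by (auto simp: list_all2_conv_all_nth)
    ultimately show "f \<in> (\<lambda>S v. v \<in> set S) ` set (up_closed_word_lists k)"
      by blast
  qed
  then have "card (monotone_bool_funs k) \<le> card ((\<lambda>S v. v \<in> set S) ` set (up_closed_word_lists k))"
    by (intro card_mono) auto
  also have "\<dots> \<le> length (up_closed_word_lists k)"
    using card_image_le[of "set (up_closed_word_lists k)"] card_length le_trans by blast
  finally show ?thesis .
qed

lemma length_up_closed_word_lists:
  "map (\<lambda>k. length (up_closed_word_lists k)) [0..<4] = [2, 3, 6, 20]"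
  by code_simp

lemma card_monotone_bool_funs_le_dedekind:
  assumes "k \<le> 3"
  shows "card (monotone_bool_funs k) \<le> [2, 3, 6, 20] ! k"
proof -
  have "length (up_closed_word_lists k) = [2, 3, 6, 20] ! k"
    using arg_cong[OF length_up_closed_word_lists, of "\<lambda>xs. xs ! k"] assms by simp
  then show ?thesis
    using card_monotone_bool_funs_le_length by metis
qed

section \<open>Decision trees\<close>

text \<open>A tree of depth \<open>k\<close> is the truth table of a function on \<open>{0,1}\<^sup>k\<close>; \<open>Node l r\<close> branches
  on the first letter, \<open>l\<close> for \<^const>\<open>False\<close> and \<open>r\<close> for \<^const>\<open>True\<close>.\<close>

datatype dtree = Leaf bool | Node dtree dtree

fun accepts :: "dtree \<Rightarrow> bool list \<Rightarrow> bool" where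
  "accepts (Leaf b) [] = b"
| "accepts (Node l r) (a # w) = accepts (if a then r else l) w"
| "accepts _ _ = False"

fun balanced :: "nat \<Rightarrow> dtree \<Rightarrow> bool" where
  "balanced 0 (Leaf b) = True"
| "balanced (Suc k) (Node l r) = (balanced k l \<and> balanced k r)"
| "balanced _ _ = False"

fun subtree :: "dtree \<Rightarrow> bool list \<Rightarrow> dtree" where
  "subtree t [] = t"
| "subtree (Node l r) (a # w) = subtree (if a then r else l) w"
| "subtree (Leaf b) (a # w) = Leaf False"

fun has_true :: "dtree \<Rightarrow> bool" where
  "has_true (Leaf b) = b"
| "has_true (Node l r) = (has_true l \<or> has_true r)"

fun level_set :: "nat \<Rightarrow> dtree \<Rightarrow> dtree list" where
  "level_set 0 t = (if has_true t then [t] else [])"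
| "level_set (Suc i) (Node l r) = List.union (level_set i l) (level_set i r)"
| "level_set (Suc i) (Leaf b) = []"

lemma accepts_append: "accepts t (w @ v) = accepts (subtree t w) v"
proof (induction t w rule: subtree.induct)
  case (3 b a w)
  then show ?case
    by (cases v) auto
qed auto

lemma balanced_subtree: "balanced k t \<Longrightarrow> length w \<le> k \<Longrightarrow> balanced (k - length w) (subtree t w)"
proof (induction t w arbitrary: k rule: subtree.induct)
  case (2 l r a w)
  then show ?case
    by (cases k) auto
next
  case (3 b a w)
  then show ?case
    by (cases k) auto
qed auto

lemma has_true_iff: "has_true t \<longleftrightarrow> (\<exists>w. accepts t w)"
proof (induction t)
  case (Leaf b)
  show ?case
  proof
    assume "\<exists>w. accepts (Leaf b) w"
    then obtain w where "accepts (Leaf b) w" ..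
    then show "has_true (Leaf b)"
      by (cases w) auto
  qed (auto intro: exI[of _ "[]"])
next
  case (Node l r)
  have "(\<exists>w. accepts (Node l r) w) \<longleftrightarrow> (\<exists>a v. accepts (if a then r else l) v)"
  proof
    assume "\<exists>w. accepts (Node l r) w"
    then obtain w where w: "accepts (Node l r) w" ..
    then obtain a v where "w = a # v"
      by (cases w) auto
    with w show "\<exists>a v. accepts (if a then r else l) v"
      by (intro exI[of _ a] exI[of _ v]) simp
  qed (metis accepts.simps(2))
  with Node.IH show ?case
    by (metis has_true.simps(2))
qed

lemma balanced_accepts_inject:
  "balanced k t \<Longrightarrow> balanced k u \<Longrightarrow> accepts t = accepts u \<Longrightarrow> t = u"
proof (induction k arbitrary: t u)
  case 0
  then show ?case
    by (cases t; cases u) (auto dest: fun_cong[of _ _ "[]"])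
next
  case (Suc k)
  then obtain l r l' r' where t: "t = Node l r" and u: "u = Node l' r'"
    by (cases t; cases u) auto
  have "accepts l = accepts l'"
    using Suc.prems(3) unfolding t u fun_eq_iff by (auto dest: spec[of _ "False # w" for w])
  moreover have "accepts r = accepts r'"
    using Suc.prems(3) unfolding t u fun_eq_iff by (auto dest: spec[of _ "True # w" for w])
  ultimately show ?case
    using Suc t u by auto
qed

lemma set_level_set:
  "balanced k t \<Longrightarrow> i \<le> k \<Longrightarrow>
     set (level_set i t) = {subtree t w | w. length w = i \<and> has_true (subtree t w)}"
proof (induction i arbitrary: k t)
  case (Suc i)
  then obtain k' l r where k: "k = Suc k'" and t: "t = Node l r"
    by (cases k; cases t) auto
  have "{subtree t w | w. length w = Suc i \<and> has_true (subtree t w)} =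
          {subtree l w | w. length w = i \<and> has_true (subtree l w)} \<union>
          {subtree r w | w. length w = i \<and> has_true (subtree r w)}"
    unfolding t by (auto simp: length_Suc_conv) (metis subtree.simps(2))+
  with Suc.IH[of k' l] Suc.IH[of k' r] Suc.prems show ?case
    unfolding k t by simp
qed auto

lemma distinct_level_set: "distinct (level_set i t)"
  by (induction i t rule: level_set.induct) auto

lemma card_residuals_at_accepts:
  assumes "balanced n t" "i \<le> n"
  shows "card (residuals_at {w. accepts t w} i) = length (level_set i t)"
proof -
  have residual: "residual w {w. accepts t w} = Collect (accepts (subtree t w))" for w
    by (simp add: residual_def accepts_append)
  have "residuals_at {w. accepts t w} i = (\<lambda>u. Collect (accepts u)) ` set (level_set i t)"
    unfolding residuals_at_def residual set_level_set[OF assms] has_true_iff by auto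
  moreover have "balanced (n - i) u" if "u \<in> set (level_set i t)" for u
    using that balanced_subtree[OF assms(1)] assms(2) unfolding set_level_set[OF assms] by auto
  then have "inj_on (\<lambda>u. Collect (accepts u)) (set (level_set i t))"
    by (intro inj_onI) (metis Collect_inj balanced_accepts_inject)
  ultimately show ?thesis
    by (simp add: card_image distinct_card distinct_level_set)
qed

section \<open>Witnesses: upward closures of antichains\<close>

definition upward_closure :: "nat \<Rightarrow> bool list list \<Rightarrow> bool list set" where
  "upward_closure n M = {w. length w = n \<and> (\<exists>m\<in>set M. list_all2 (\<le>) m w)}"

fun up_tree :: "nat \<Rightarrow> bool list list \<Rightarrow> dtree" where
  "up_tree 0 M = Leaf ([] \<in> set M)"
| "up_tree (Suc k) M =
     Node (up_tree k [tl m. m \<leftarrow> M, m \<noteq> [], \<not> hd m]) (up_tree k [tl m. m \<leftarrow> M, m \<noteq> []])"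

lemma monotone_lang_upward_closure: "monotone_lang n (upward_closure n M)"
  unfolding monotone_lang_def upward_closure_def
  by (auto simp: list_all2_conv_all_nth intro: order_trans)

lemma balanced_up_tree: "balanced k (up_tree k M)"
  by (induction k arbitrary: M) auto

lemma accepts_up_tree: "accepts (up_tree k M) w \<longleftrightarrow> w \<in> upward_closure k M"
proof (induction k arbitrary: M w)
  case 0
  then show ?case
    by (cases w) (auto simp: upward_closure_def)
next
  case (Suc k)
  show ?case
  proof (cases w)
    case (Cons a v)
    have "(\<exists>m\<in>set M. list_all2 (\<le>) m (a # v)) \<longleftrightarrow>
            (\<exists>m\<in>set M. m \<noteq> [] \<and> hd m \<le> a \<and> list_all2 (\<le>) (tl m) v)"
      by (metis list.collapse list.distinct(1) list.sel(1,3) list_all2_Cons list_all2_Nil)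
    with Suc Cons show ?thesis
      by (cases a) (auto simp: upward_closure_def)
  qed (simp add: upward_closure_def)
qed

text \<open>\<open>[2, 3, 6, 20]\<close> are the Dedekind numbers \<open>|F\<^sub>0|, \<dots>, |F\<^sub>3|\<close>: at levels with at most three
  remaining variables it suffices to meet the bound \<open>|F\<^sub>n\<^sub>-\<^sub>i| - 1\<close>.\<close>

definition attains_bound :: "nat \<Rightarrow> dtree \<Rightarrow> bool" where
  "attains_bound n t \<longleftrightarrow>
     (\<forall>i \<le> n. 2 ^ i \<le> length (level_set i t) \<or>
               (n - i \<le> 3 \<and> [2, 3, 6, 20] ! (n - i) \<le> length (level_set i t) + 1))"

lemma min_pdfa_states_upward_closure:
  assumes "attains_bound n (up_tree n M)"
  shows "min_pdfa_states (upward_closure n M) = monotone_state_bound n"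
proof (rule min_pdfa_states_monotone_eq[OF monotone_lang_upward_closure])
  fix i assume i: "i \<le> n"
  have count: "card (residuals_at (upward_closure n M) i) = length (level_set i (up_tree n M))"
    using card_residuals_at_accepts[OF balanced_up_tree i] by (simp add: accepts_up_tree)
  show "min (2 ^ i) (card (monotone_bool_funs (n - i)) - 1) \<le>
          card (residuals_at (upward_closure n M) i)"
    using assms i card_monotone_bool_funs_le_dedekind[of "n - i"]
    unfolding count attains_bound_def by fastforce
qed

definition witness_minterms :: "string list list" where
  "witness_minterms =
   [[''''],
    [''0''],
    [''01'', ''10''],
    [''001'', ''100''],
    [''0011'', ''0101'', ''0110'', ''1001'', ''1100''],
    [''00110'', ''01011'', ''10101'', ''11001'', ''11100''],
    [''000111'', ''001101'', ''010110'', ''011100'', ''100101'', ''100110'',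
     ''101010'', ''110011'', ''110100''],
    [''0000111'', ''0001011'', ''0010101'', ''0011110'', ''0100110'', ''0111010'',
     ''0111100'', ''1000011'', ''1000101'', ''1001100'', ''1010010'', ''1011001'',
     ''1100001'', ''1111000''],
    [''00001111'', ''00011001'', ''00101011'', ''00101110'', ''00110101'', ''00111100'',
     ''01001110'', ''01010011'', ''01011100'', ''01100111'', ''01101010'', ''10000111'',
     ''10001101'', ''10010011'', ''10010101'', ''10010110'', ''10011010'', ''10100110'',
     ''10101010'', ''10110001'', ''11000101'', ''11000110'', ''11001100'', ''11010001'',
     ''11010010'', ''11100011'', ''11100100'', ''11110000''],
    [''000000111'', ''000011110'', ''000101101'', ''000110101'', ''001001011'', ''001010110'',
     ''001100011'', ''001111010'', ''010000110'', ''010011010'', ''010101011'', ''010111100'',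
     ''011001001'', ''011010101'', ''011100101'', ''011110100'', ''100000101'', ''100010110'',
     ''100101001'', ''101110010'', ''110001100'', ''110010011'', ''110101010'', ''110110010'',
     ''111101000''],
    [''0000001111'', ''0000011101'', ''0000101110'', ''0001000111'', ''0001001110'', ''0001100110'',
     ''0001110101'', ''0010001011'', ''0010001101'', ''0010010111'', ''0010011110'', ''0010110101'',
     ''0011000011'', ''0011011001'', ''0011111100'', ''0100001011'', ''0100010111'', ''0100110101'',
     ''0100111100'', ''0101011100'', ''0101101010'', ''0101110100'', ''0110001001'', ''0111001010'',
     ''0111100101'', ''0111111000'', ''1000000111'', ''1000001011'', ''1000010101'', ''1000100011'',
     ''1000110110'', ''1001000110'', ''1001111001'', ''1010001001'', ''1010010011'', ''1010101100'',
     ''1010111010'', ''1011010001'', ''1011111000'', ''1100001010'', ''1101001101'', ''1101110001'',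
     ''1110100110'', ''1110101000'', ''1111100001'', ''1111100100'', ''1111110010'']]"

definition witness_antichain :: "nat \<Rightarrow> bool list list" where
  "witness_antichain n = map (map (\<lambda>c. c = CHR ''1'')) (witness_minterms ! n)"

lemma attains_bound_witnesses:
  "list_all (\<lambda>n. attains_bound n (up_tree n (witness_antichain n))) [0..<11]"
  by code_simp

theorem mainTheorem4:
  shows "(\<forall>n L. monotone_lang n L \<longrightarrow>
            min_pdfa_states L \<le> (\<Sum>i = 0..n. min (2 ^ i) (card (monotone_bool_funs (n - i)) - 1)))
       \<and> (\<forall>n \<le> 10. \<exists>L. monotone_lang n L \<and>
            min_pdfa_states L = (\<Sum>i = 0..n. min (2 ^ i) (card (monotone_bool_funs (n - i)) - 1)))"
  unfolding monotone_state_bound_def[symmetric]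
proof (intro conjI allI impI)
  fix n L assume "monotone_lang n L"
  then show "min_pdfa_states L \<le> monotone_state_bound n"
    by (rule min_pdfa_states_monotone_le)
next
  fix n :: nat assume "n \<le> 10"
  then have "attains_bound n (up_tree n (witness_antichain n))"
    using attains_bound_witnesses by (simp add: list_all_iff)
  then show "\<exists>L. monotone_lang n L \<and> min_pdfa_states L = monotone_state_bound n"
    using monotone_lang_upward_closure min_pdfa_states_upward_closure by blast
qed

end
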